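(* Consider the following schemata and rule over QHC: (D$_\nabla$) $\nabla\alpha\lor\neg\nabla\alpha$ for all problems $\alpha$ (decidability of all problems of the form $\nabla\alpha$); (WEM) $\neg\alpha\lor\neg\neg\alpha$ for all problems $\alpha$; (D$_{\rm prop}$) $!p\lor !\neg p$ for all propositions $p$ (decidability of all propositions); the Exclusive Disjunction Rule (EDR): from $\neg(\alpha\land\beta)$ infer $\nabla(\alpha\lor\beta)\to\nabla\alpha\lor\nabla\beta$, for all problems $\alpha,\beta$. Then, over QHC: (a) (D$_\nabla$) implies (WEM); (b) (WEM) implies that (EDR) is derivable; (c) (D$_\nabla$) is equivalent to the conjunction of Hilbert's No Ignorabimus Principle and (EDR); (d) (D$_{\rm prop}$) is equivalent to the conjunction of Kolmogorov's Stability Principle and (EDR).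
   Context: QHC is a two-sorted first-order calculus. Its only terms are individual variables. Every formula is either a problem (denoted by Greek letters $\alpha,\beta,\gamma,\dots$) or a proposition (denoted by Latin letters $p,q,\dots$). Atomic formulas are proposition variables $p(t_1,\dots,t_n)$ (of proposition type), problem variables $\pi(t_1,\dots,t_n)$ (of problem type), and the constants $0$ (a proposition, classical falsity) and $\bot$ (a problem, intuitionistic absurdity). Propositions are closed under the classical connectives $\land,\lor,\to$ and quantifiers $\exists,\forall$; problems are closed under the intuitionistic connectives $\land,\lor,\to$ and quantifiers $\exists,\forall$ (the same symbols are used, distinguished by the type of the arguments). $\neg p$ abbreviates $p\to 0$, $\neg\alpha$ abbreviates $\alpha\to\bot$, and $\leftrightarrow$ is defined as usual. There are two type-conversion operators: if $p$ is a proposition then $!p$ is a problem, and if $\alpha$ is a problem then $?\alpha$ is a proposition. Deductive system of QHC: all axioms and rules of classical predicate logic applied to all propositions; all postulates and rules of intuitionistic predicate logic applied to all problems; the rules $p\,/\,!p$ and $\alpha\,/\,?\alpha$; and the schemas $?!p\to p$; $\alpha\to\, !?\alpha$; $!(p\to q)\to(!p\to !q)$; $?(\alpha\to\beta)\to(?\alpha\to ?\beta)$; $!0\to\bot$; $?(\alpha\land\beta)\leftrightarrow ?\alpha\land ?\beta$; $?(\alpha\lor\beta)\leftrightarrow ?\alpha\lor ?\beta$; $?\bot\to 0$; $?\exists x\,\alpha(x)\leftrightarrow\exists x\,?\alpha(x)$; $?\forall x\,\alpha(x)\to\forall x\,?\alpha(x)$ (usual variable side conditions implicit). $\vdash A$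 means $A$ is derivable in QHC; $A\Rightarrow B$ means $\vdash A\to B$ and $A\Leftrightarrow B$ means $\vdash A\leftrightarrow B$ (with $A,B$ of the same type); $A\vdash B$ means $B$ is derivable in QHC from the premise $A$. Notation: $\Box p := ?!p$ (a proposition) and $\nabla\alpha := !?\alpha$ (a problem). QC and QH denote classical and intuitionistic predicate calculus. Hilbert's No Ignorabimus Principle is the schema $?(\gamma\lor\neg\gamma)$ for all problems $\gamma$. Kolmogorov's Stability Principle is the schema $\neg !\neg p\to !p$ for all propositions $p$. "Over QHC, X implies Y" means that after adding X (schema or rule) to QHC, Y (all its instances, resp. the rule) becomes derivable. *)

theory Defs
  imports Main
begin

text \<open>Individual variables are natural numbers (the only terms).
Propositions (classical sort) and problems (intuitionistic sort) are two
mutually recursive datatypes.\<close>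

datatype qprop =
    PVar nat "nat list"
  | Zero
  | PAnd qprop qprop
  | POr qprop qprop
  | PImp qprop qprop
  | PEx nat qprop
  | PAll nat qprop
  | Qm qprob                 (* ?alpha *)
and qprob =
    QVar nat "nat list"
  | Bot
  | QAnd qprob qprob
  | QOr qprob qprob
  | QImp qprob qprob
  | QEx nat qprob
  | QAll nat qprob
  | Bang qprop

primrec fvP :: "qprop \<Rightarrow> nat set" and fvQ :: "qprob \<Rightarrow> nat set" where
  "fvP (PVar n ts) = set ts"
| "fvP Zero = {}"
| "fvP (PAnd a b) = fvP a \<union> fvP b"
| "fvP (POr a b) = fvP a \<union> fvP b"
| "fvP (PImp a b) = fvP a \<union> fvP b"
| "fvP (PEx x a) = fvP a - {x}"
| "fvP (PAll x a) = fvP a - {x}"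
| "fvP (Qm a) = fvQ a"
| "fvQ (QVar n ts) = set ts"
| "fvQ Bot = {}"
| "fvQ (QAnd a b) = fvQ a \<union> fvQ b"
| "fvQ (QOr a b) = fvQ a \<union> fvQ b"
| "fvQ (QImp a b) = fvQ a \<union> fvQ b"
| "fvQ (QEx x a) = fvQ a - {x}"
| "fvQ (QAll x a) = fvQ a - {x}"
| "fvQ (Bang p) = fvP p"

definition rn :: "nat \<Rightarrow> nat \<Rightarrow> nat \<Rightarrow> nat" where
  "rn x y z = (if z = x then y else z)"

primrec substP :: "nat \<Rightarrow> nat \<Rightarrow> qprop \<Rightarrow> qprop"
    and substQ :: "nat \<Rightarrow> nat \<Rightarrow> qprob \<Rightarrow> qprob" where
  "substP x y (PVar n ts) = PVar n (map (rn x y) ts)"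
| "substP x y Zero = Zero"
| "substP x y (PAnd a b) = PAnd (substP x y a) (substP x y b)"
| "substP x y (POr a b) = POr (substP x y a) (substP x y b)"
| "substP x y (PImp a b) = PImp (substP x y a) (substP x y b)"
| "substP x y (PEx z a) = (if z = x then PEx z a else PEx z (substP x y a))"
| "substP x y (PAll z a) = (if z = x then PAll z a else PAll z (substP x y a))"
| "substP x y (Qm a) = Qm (substQ x y a)"
| "substQ x y (QVar n ts) = QVar n (map (rn x y) ts)"
| "substQ x y Bot = Bot"
| "substQ x y (QAnd a b) = QAnd (substQ x y a) (substQ x y b)"
| "substQ x y (QOr a b) = QOr (substQ x y a) (substQ x y b)"
| "substQ x y (QImp a b) = QImp (substQ x y a) (substQ x y b)"
| "substQ x y (QEx z a) = (if z = x then QEx z a else QEx z (substQ x y a))"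
| "substQ x y (QAll z a) = (if z = x then QAll z a else QAll z (substQ x y a))"
| "substQ x y (Bang p) = Bang (substP x y p)"

primrec freeforP :: "nat \<Rightarrow> nat \<Rightarrow> qprop \<Rightarrow> bool"
    and freeforQ :: "nat \<Rightarrow> nat \<Rightarrow> qprob \<Rightarrow> bool" where
  "freeforP x y (PVar n ts) = True"
| "freeforP x y Zero = True"
| "freeforP x y (PAnd a b) = (freeforP x y a \<and> freeforP x y b)"
| "freeforP x y (POr a b) = (freeforP x y a \<and> freeforP x y b)"
| "freeforP x y (PImp a b) = (freeforP x y a \<and> freeforP x y b)"
| "freeforP x y (PEx z a) = (z = x \<or> x \<notin> fvP a \<or> (z \<noteq> y \<and> freeforP x y a))"
| "freeforP x y (PAll z a) = (z = x \<or> x \<notin> fvP a \<or> (z \<noteq> y \<and> freeforP x y a))"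
| "freeforP x y (Qm a) = freeforQ x y a"
| "freeforQ x y (QVar n ts) = True"
| "freeforQ x y Bot = True"
| "freeforQ x y (QAnd a b) = (freeforQ x y a \<and> freeforQ x y b)"
| "freeforQ x y (QOr a b) = (freeforQ x y a \<and> freeforQ x y b)"
| "freeforQ x y (QImp a b) = (freeforQ x y a \<and> freeforQ x y b)"
| "freeforQ x y (QEx z a) = (z = x \<or> x \<notin> fvQ a \<or> (z \<noteq> y \<and> freeforQ x y a))"
| "freeforQ x y (QAll z a) = (z = x \<or> x \<notin> fvQ a \<or> (z \<noteq> y \<and> freeforQ x y a))"
| "freeforQ x y (Bang p) = freeforP x y p"

definition negP :: "qprop \<Rightarrow> qprop" where "negP p = PImp p Zero"
definition negQ :: "qprob \<Rightarrow> qprob" where "negQ a = QImp a Bot"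
definition iffP :: "qprop \<Rightarrow> qprop \<Rightarrow> qprop" where "iffP p q = PAnd (PImp p q) (PImp q p)"
definition iffQ :: "qprob \<Rightarrow> qprob \<Rightarrow> qprob" where "iffQ a b = QAnd (QImp a b) (QImp b a)"

definition Box :: "qprop \<Rightarrow> qprop" where "Box p = Qm (Bang p)"
definition Nabla :: "qprob \<Rightarrow> qprob" where "Nabla a = Bang (Qm a)"

text \<open>dP AxP AxQ R p: proposition p is derivable in QHC extended by the
extra proposition axioms AxP, extra problem axioms AxQ (these also serve as
premises/hypotheses) and extra one-premise problem rules R (pairs premise,
conclusion).\<close>

inductive dP :: "qprop set \<Rightarrow> qprob set \<Rightarrow> (qprob \<times> qprob) set \<Rightarrow> qprop \<Rightarrow> bool"
      and dQ :: "qprop set \<Rightarrow> qprob set \<Rightarrow> (qprob \<times> qprob) set \<Rightarrow> qprob \<Rightarrow> bool"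
  for AxP AxQ R where
  P1: "dP AxP AxQ R (PImp a (PImp b a))"
| P2: "dP AxP AxQ R (PImp (PImp a (PImp b c)) (PImp (PImp a b) (PImp a c)))"
| P3: "dP AxP AxQ R (PImp (PAnd a b) a)"
| P4: "dP AxP AxQ R (PImp (PAnd a b) b)"
| P5: "dP AxP AxQ R (PImp a (PImp b (PAnd a b)))"
| P6: "dP AxP AxQ R (PImp a (POr a b))"
| P7: "dP AxP AxQ R (PImp b (POr a b))"
| P8: "dP AxP AxQ R (PImp (PImp a c) (PImp (PImp b c) (PImp (POr a b) c)))"
| P9: "dP AxP AxQ R (PImp Zero a)"
| PDN: "dP AxP AxQ R (PImp (negP (negP a)) a)"
| PAllE: "freeforP x y a \<Longrightarrow> dP AxP AxQ R (PImp (PAll x a) (substP x y a))"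
| PExI: "freeforP x y a \<Longrightarrow> dP AxP AxQ R (PImp (substP x y a) (PEx x a))"
| PMP: "dP AxP AxQ R (PImp a b) \<Longrightarrow> dP AxP AxQ R a \<Longrightarrow> dP AxP AxQ R b"
| PAllI: "dP AxP AxQ R (PImp b a) \<Longrightarrow> x \<notin> fvP b \<Longrightarrow> dP AxP AxQ R (PImp b (PAll x a))"
| PExE: "dP AxP AxQ R (PImp a b) \<Longrightarrow> x \<notin> fvP b \<Longrightarrow> dP AxP AxQ R (PImp (PEx x a) b)"
| Q1: "dQ AxP AxQ R (QImp a (QImp b a))"
| Q2: "dQ AxP AxQ R (QImp (QImp a (QImp b c)) (QImp (QImp a b) (QImp a c)))"
| Q3: "dQ AxP AxQ R (QImp (QAnd a b) a)"
| Q4: "dQ AxP AxQ R (QImp (QAnd a b) b)"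
| Q5: "dQ AxP AxQ R (QImp a (QImp b (QAnd a b)))"
| Q6: "dQ AxP AxQ R (QImp a (QOr a b))"
| Q7: "dQ AxP AxQ R (QImp b (QOr a b))"
| Q8: "dQ AxP AxQ R (QImp (QImp a c) (QImp (QImp b c) (QImp (QOr a b) c)))"
| Q9: "dQ AxP AxQ R (QImp Bot a)"
| QAllE: "freeforQ x y a \<Longrightarrow> dQ AxP AxQ R (QImp (QAll x a) (substQ x y a))"
| QExI: "freeforQ x y a \<Longrightarrow> dQ AxP AxQ R (QImp (substQ x y a) (QEx x a))"
| QMP: "dQ AxP AxQ R (QImp a b) \<Longrightarrow> dQ AxP AxQ R a \<Longrightarrow> dQ AxP AxQ R b"
| QAllI: "dQ AxP AxQ R (QImp b a) \<Longrightarrow> x \<notin> fvQ b \<Longrightarrow> dQ AxP AxQ R (QImp b (QAll x a))"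
| QExE: "dQ AxP AxQ R (QImp a b) \<Longrightarrow> x \<notin> fvQ b \<Longrightarrow> dQ AxP AxQ R (QImp (QEx x a) b)"
| BangR: "dP AxP AxQ R p \<Longrightarrow> dQ AxP AxQ R (Bang p)"
| QmR: "dQ AxP AxQ R a \<Longrightarrow> dP AxP AxQ R (Qm a)"
| H1: "dP AxP AxQ R (PImp (Qm (Bang p)) p)"
| H2: "dQ AxP AxQ R (QImp a (Bang (Qm a)))"
| H3: "dQ AxP AxQ R (QImp (Bang (PImp p q)) (QImp (Bang p) (Bang q)))"
| H4: "dP AxP AxQ R (PImp (Qm (QImp a b)) (PImp (Qm a) (Qm b)))"
| H5: "dQ AxP AxQ R (QImp (Bang Zero) Bot)"
| H6: "dP AxP AxQ R (iffP (Qm (QAnd a b)) (PAnd (Qm a) (Qm b)))"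
| H7: "dP AxP AxQ R (iffP (Qm (QOr a b)) (POr (Qm a) (Qm b)))"
| H8: "dP AxP AxQ R (PImp (Qm Bot) Zero)"
| H9: "dP AxP AxQ R (iffP (Qm (QEx x a)) (PEx x (Qm a)))"
| H10: "dP AxP AxQ R (PImp (Qm (QAll x a)) (PAll x (Qm a)))"
| AxPI: "p \<in> AxP \<Longrightarrow> dP AxP AxQ R p"
| AxQI: "a \<in> AxQ \<Longrightarrow> dQ AxP AxQ R a"
| RuleI: "(a, b) \<in> R \<Longrightarrow> dQ AxP AxQ R a \<Longrightarrow> dQ AxP AxQ R b"

definition D_nabla :: "qprob set" where
  "D_nabla = {QOr (Nabla a) (negQ (Nabla a)) | a. True}"
definition WEM :: "qprob set" where
  "WEM = {QOr (negQ a) (negQ (negQ a)) | a. True}"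
definition D_prop :: "qprob set" where
  "D_prop = {QOr (Bang p) (Bang (negP p)) | p. True}"
definition HNIP :: "qprop set" where
  "HNIP = {Qm (QOr g (negQ g)) | g. True}"
definition KSP :: "qprob set" where
  "KSP = {QImp (negQ (Bang (negP p))) (Bang p) | p. True}"
definition EDR :: "(qprob \<times> qprob) set" where
  "EDR = {(negQ (QAnd a b), QImp (Nabla (QOr a b)) (QOr (Nabla a) (Nabla b))) | a b. True}"

definition EDR_derivable :: "qprop set \<Rightarrow> qprob set \<Rightarrow> (qprob \<times> qprob) set \<Rightarrow> bool" where
  "EDR_derivable AxP AxQ R = (\<forall>(h, c) \<in> EDR. dQ AxP (AxQ \<union> {h}) R c)"

end

theory Submission
  imports Defs
begin

text \<open>Both conversions are monotone (by the K-schemata for ! and ?), hence so is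
\<open>\<nabla> = !?\<close>; together with \<open>\<alpha> \<rightarrow> \<nabla>\<alpha>\<close> and \<open>\<nabla>\<bottom> \<rightarrow> \<bottom>\<close> this gives
\<open>\<nabla>\<alpha> \<rightarrow> \<not>\<not>\<alpha>\<close> and \<open>\<nabla>\<not>\<alpha> \<rightarrow> \<not>\<nabla>\<alpha>\<close>.
(a) Decidability of \<open>\<nabla>\<alpha>\<close> therefore yields \<open>\<not>\<not>\<alpha> \<or> \<not>\<alpha>\<close>.
(b) Under \<open>\<not>(\<alpha> \<and> \<beta>)\<close>, the case \<open>\<not>\<alpha>\<close> turns \<open>\<nabla>(\<alpha> \<or> \<beta>)\<close> into \<open>\<nabla>\<beta>\<close> by monotonicity
of \<open>\<nabla>\<close>, and the case \<open>\<not>\<not>\<alpha>\<close> gives \<open>\<not>\<beta>\<close> and symmetrically \<open>\<nabla>\<alpha>\<close>.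
(c) Applying ? to \<open>\<nabla>\<gamma> \<or> \<not>\<nabla>\<gamma>\<close> and using \<open>?!p \<rightarrow> p\<close> gives \<open>?(\<gamma> \<or> \<not>\<gamma>)\<close>; conversely
that proposition yields \<open>\<nabla>(\<gamma> \<or> \<not>\<gamma>)\<close>, which EDR splits into \<open>\<nabla>\<gamma> \<or> \<nabla>\<not>\<gamma>\<close>.
(d) From \<open>!?\<alpha> \<or> !\<not>?\<alpha>\<close> EDR follows as in (b), classically inside !.  Conversely, for
\<open>x = !p\<close> and \<open>y = !\<not>p\<close> the problem \<open>!\<not>?(x \<or> y)\<close> is refutable: it gives \<open>\<not>x\<close> and \<open>\<not>y\<close>,
and stability turns \<open>\<not>y\<close> into \<open>x\<close>.  So stability yields \<open>\<nabla>(x \<or> y)\<close>, EDR splits it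
(as \<open>\<not>(x \<and> y)\<close>), and \<open>\<nabla>!p \<rightarrow> !p\<close>.\<close>

locale qhc_theory =
  fixes AxP :: "qprop set" and AxQ :: "qprob set" and R :: "(qprob \<times> qprob) set"
begin

abbreviation provQ :: "qprob \<Rightarrow> bool" where "provQ a \<equiv> dQ AxP AxQ R a"
abbreviation provP :: "qprop \<Rightarrow> bool" where "provP p \<equiv> dP AxP AxQ R p"

lemma qimp_const: "provQ b \<Longrightarrow> provQ (QImp a b)"
  by (rule QMP[OF Q1])

lemma qimp_app: "provQ (QImp a (QImp b c)) \<Longrightarrow> provQ (QImp a b) \<Longrightarrow> provQ (QImp a c)"
  by (meson QMP Q2)

lemma qimp_refl: "provQ (QImp a a)"
  by (meson qimp_app Q1)

lemma qimp_trans: "provQ (QImp a b) \<Longrightarrow> provQ (QImp b c) \<Longrightarrow> provQ (QImp a c)"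
  by (meson qimp_app qimp_const)

lemma qimp_swap: "provQ (QImp a (QImp b c)) \<Longrightarrow> provQ (QImp b (QImp a c))"
  by (meson qimp_trans Q1 QMP Q2)

lemma qimp_trans_concl2: "provQ (QImp a (QImp b c)) \<Longrightarrow> provQ (QImp c d) \<Longrightarrow> provQ (QImp a (QImp b d))"
  by (meson qimp_trans QMP Q2 qimp_const)

lemma qimp_antimono: "provQ (QImp a b) \<Longrightarrow> provQ (QImp (QImp b c) (QImp a c))"
  by (meson qimp_swap qimp_trans Q1 Q2 QMP)

lemma qimp_trans_prem2: "provQ (QImp a (QImp b c)) \<Longrightarrow> provQ (QImp b' b) \<Longrightarrow> provQ (QImp a (QImp b' c))"
  by (meson qimp_trans qimp_antimono)

lemma qor_elim: "provQ (QImp a c) \<Longrightarrow> provQ (QImp b c) \<Longrightarrow> provQ (QImp (QOr a b) c)"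
  by (meson QMP Q8)

lemma qand_uncurry: "provQ (QImp a (QImp b c)) \<Longrightarrow> provQ (QImp (QAnd a b) c)"
  by (meson qimp_app qimp_trans Q3 Q4)

lemma qand_curry: "provQ (QImp (QAnd a b) c) \<Longrightarrow> provQ (QImp a (QImp b c))"
  by (meson qimp_trans_concl2 Q5)

lemma qimp_mp: "provQ (QImp a (QImp (QImp a c) c))"
  by (rule qimp_swap[OF qimp_refl])

lemma pimp_const: "provP b \<Longrightarrow> provP (PImp a b)"
  by (rule PMP[OF P1])

lemma pimp_app: "provP (PImp a (PImp b c)) \<Longrightarrow> provP (PImp a b) \<Longrightarrow> provP (PImp a c)"
  by (meson PMP P2)

lemma pimp_refl: "provP (PImp a a)"
  by (meson pimp_app P1)

lemma pimp_trans: "provP (PImp a b) \<Longrightarrow> provP (PImp b c) \<Longrightarrow> provP (PImp a c)"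
  by (meson pimp_app pimp_const)

lemma pimp_swap: "provP (PImp a (PImp b c)) \<Longrightarrow> provP (PImp b (PImp a c))"
  by (meson pimp_trans P1 PMP P2)

lemma pimp_trans_concl2: "provP (PImp a (PImp b c)) \<Longrightarrow> provP (PImp c d) \<Longrightarrow> provP (PImp a (PImp b d))"
  by (meson pimp_trans PMP P2 pimp_const)

lemma pimp_antimono: "provP (PImp a b) \<Longrightarrow> provP (PImp (PImp b c) (PImp a c))"
  by (meson pimp_swap pimp_trans P1 P2 PMP)

lemma por_elim: "provP (PImp a c) \<Longrightarrow> provP (PImp b c) \<Longrightarrow> provP (PImp (POr a b) c)"
  by (meson PMP P8)

lemma pimp_mp: "provP (PImp a (PImp (PImp a c) c))"
  by (rule pimp_swap[OF pimp_refl])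

lemma iffP_mp: "provP (iffP p q) \<Longrightarrow> provP (PImp p q)"
  unfolding iffP_def by (meson PMP P3)

lemma iffP_mp_rev: "provP (iffP p q) \<Longrightarrow> provP (PImp q p)"
  unfolding iffP_def by (meson PMP P4)

lemma negP_or_elim: "provP (PImp (negP a) (PImp (POr a b) b))"
  unfolding negP_def by (rule pimp_swap, rule por_elim[OF pimp_trans_concl2[OF pimp_mp P9] P1])

lemma negQ_or_elim_left: "provQ (QImp (negQ a) (QImp (QOr a b) b))"
  unfolding negQ_def by (rule qimp_swap, rule qor_elim[OF qimp_trans_concl2[OF qimp_mp Q9] Q1])

lemma negQ_or_elim_right: "provQ (QImp (negQ b) (QImp (QOr a b) a))"
  unfolding negQ_def by (rule qimp_swap, rule qor_elim[OF Q1 qimp_trans_concl2[OF qimp_mp Q9]])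

lemma negQ_and_self: "provQ (negQ (QAnd a (negQ a)))"
  unfolding negQ_def by (rule qand_uncurry[OF qimp_mp])

lemma Bang_mono: "provP (PImp p q) \<Longrightarrow> provQ (QImp (Bang p) (Bang q))"
  by (rule QMP[OF H3 BangR])

lemma Bang_mono2: "provP (PImp p (PImp q r)) \<Longrightarrow> provQ (QImp (Bang p) (QImp (Bang q) (Bang r)))"
  by (meson Bang_mono H3 qimp_trans)

lemma Qm_mono: "provQ (QImp a b) \<Longrightarrow> provP (PImp (Qm a) (Qm b))"
  by (rule PMP[OF H4 QmR])

lemma Qm_mono2: "provQ (QImp a (QImp b c)) \<Longrightarrow> provP (PImp (Qm a) (PImp (Qm b) (Qm c)))"
  by (meson Qm_mono H4 pimp_trans)

lemma Nabla_mono2: "provQ (QImp a (QImp b c)) \<Longrightarrow> provQ (QImp (Nabla a) (QImp (Nabla b) (Nabla c)))"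
  unfolding Nabla_def by (rule Bang_mono2[OF Qm_mono2])

lemma Nabla_intro: "provQ (QImp a (Nabla a))"
  unfolding Nabla_def by (rule H2)

lemma Nabla_Bot: "provQ (negQ (Nabla Bot))"
  unfolding negQ_def Nabla_def by (rule qimp_trans[OF Bang_mono[OF H8] H5])

lemma Nabla_Bang: "provQ (QImp (Nabla (Bang p)) (Bang p))"
  unfolding Nabla_def by (rule Bang_mono[OF H1])

lemma Nabla_negQ: "provQ (QImp (Nabla (negQ a)) (negQ (Nabla a)))"
  unfolding negQ_def by (rule qimp_trans_concl2[OF Nabla_mono2[OF qimp_refl] Nabla_Bot[unfolded negQ_def]])

lemma negQ_Nabla: "provQ (QImp (negQ a) (negQ (Nabla a)))"
  by (rule qimp_trans[OF Nabla_intro Nabla_negQ])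

lemma negQ_Nabla_rev: "provQ (QImp (negQ (Nabla a)) (negQ a))"
  unfolding negQ_def by (rule qimp_antimono[OF Nabla_intro])

lemma Nabla_negQ_negQ: "provQ (QImp (Nabla a) (negQ (negQ a)))"
  unfolding negQ_def by (rule qimp_swap[OF negQ_Nabla[unfolded negQ_def]])

lemma Bang_negP: "provQ (QImp (Bang (negP (Qm a))) (negQ a))"
  unfolding negQ_def negP_def
  by (rule qimp_trans_prem2[OF qimp_trans_concl2[OF Bang_mono2[OF pimp_refl] H5] H2])

lemma Bang_negP_and_self: "provQ (negQ (QAnd (Bang p) (Bang (negP p))))"
  unfolding negQ_def negP_def
  by (rule qand_uncurry[OF qimp_trans_concl2[OF Bang_mono2[OF pimp_mp] H5]])

lemma wem_of_decidable_Nabla: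
  "provQ (QOr (Nabla a) (negQ (Nabla a))) \<Longrightarrow> provQ (QOr (negQ a) (negQ (negQ a)))"
  by (rule QMP[OF qor_elim[OF qimp_trans[OF Nabla_negQ_negQ Q7] qimp_trans[OF negQ_Nabla_rev Q6]]])

lemma edr_of_wem:
  assumes disjoint: "provQ (negQ (QAnd a b))"
    and wem: "provQ (QOr (negQ a) (negQ (negQ a)))"
  shows "provQ (QImp (Nabla (QOr a b)) (QOr (Nabla a) (Nabla b)))"
proof -
  have case_neg: "provQ (QImp (negQ a) (QImp (Nabla (QOr a b)) (QOr (Nabla a) (Nabla b))))"
    by (rule qimp_trans[OF Nabla_intro qimp_trans_concl2[OF Nabla_mono2[OF negQ_or_elim_left] Q7]])
  have "provQ (QImp b (negQ a))"
    using qimp_swap[OF qand_curry[OF disjoint[unfolded negQ_def]]] by (simp add: negQ_def)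
  then have "provQ (QImp (negQ (negQ a)) (negQ b))"
    unfolding negQ_def by (rule qimp_antimono)
  then have case_negneg: "provQ (QImp (negQ (negQ a)) (QImp (Nabla (QOr a b)) (QOr (Nabla a) (Nabla b))))"
    by (rule qimp_trans[OF _ qimp_trans[OF Nabla_intro
          qimp_trans_concl2[OF Nabla_mono2[OF negQ_or_elim_right] Q6]]])
  show ?thesis
    by (rule QMP[OF qor_elim[OF case_neg case_negneg] wem])
qed

lemma hnip_of_decidable_Nabla:
  assumes "provQ (QOr (Nabla g) (negQ (Nabla g)))"
  shows "provP (Qm (QOr g (negQ g)))"
proof -
  have "provP (POr (Qm (Nabla g)) (Qm (negQ (Nabla g))))"
    by (rule PMP[OF iffP_mp[OF H7] QmR[OF assms]])
  moreover have "provP (PImp (POr (Qm (Nabla g)) (Qm (negQ (Nabla g)))) (POr (Qm g) (Qm (negQ g))))"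
    unfolding Nabla_def
    by (rule por_elim[OF pimp_trans[OF H1 P6] pimp_trans[OF Qm_mono[OF negQ_Nabla_rev[unfolded Nabla_def]] P7]])
  ultimately have "provP (POr (Qm g) (Qm (negQ g)))"
    by (rule PMP[rotated])
  then show ?thesis
    by (rule PMP[OF iffP_mp_rev[OF H7]])
qed

lemma decidable_Nabla_of_hnip_edr:
  assumes hnip: "provP (Qm (QOr g (negQ g)))"
    and edr: "\<And>a b. provQ (negQ (QAnd a b)) \<Longrightarrow>
      provQ (QImp (Nabla (QOr a b)) (QOr (Nabla a) (Nabla b)))"
  shows "provQ (QOr (Nabla g) (negQ (Nabla g)))"
proof -
  have "provQ (Nabla (QOr g (negQ g)))"
    unfolding Nabla_def by (rule BangR[OF hnip])
  then have "provQ (QOr (Nabla g) (Nabla (negQ g)))"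
    by (rule QMP[OF edr[OF negQ_and_self]])
  then show ?thesis
    by (rule QMP[OF qor_elim[OF Q6 qimp_trans[OF Nabla_negQ Q7]]])
qed

lemma ksp_of_decidable_prop:
  "provQ (QOr (Bang p) (Bang (negP p))) \<Longrightarrow> provQ (QImp (negQ (Bang (negP p))) (Bang p))"
  unfolding negQ_def by (rule QMP[OF qor_elim[OF Q1 qimp_trans_concl2[OF qimp_mp Q9]]])

lemma edr_of_decidable_prop:
  assumes decidable: "provQ (QOr (Bang (Qm a)) (Bang (negP (Qm a))))"
  shows "provQ (QImp (Nabla (QOr a b)) (QOr (Nabla a) (Nabla b)))"
  unfolding Nabla_def
proof -
  have split: "provQ (QImp (Bang (Qm (QOr a b))) (Bang (POr (Qm a) (Qm b))))"
    by (rule Bang_mono[OF iffP_mp[OF H7]])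
  have case_neg: "provQ (QImp (Bang (negP (Qm a)))
      (QImp (Bang (Qm (QOr a b))) (QOr (Bang (Qm a)) (Bang (Qm b)))))"
    by (rule qimp_trans_concl2[OF qimp_trans_prem2[OF Bang_mono2[OF negP_or_elim] split] Q7])
  have case_pos: "provQ (QImp (Bang (Qm a)) (QImp (Bang (Qm (QOr a b))) (QOr (Bang (Qm a)) (Bang (Qm b)))))"
    by (rule qimp_trans[OF Q6 Q1])
  show "provQ (QImp (Bang (Qm (QOr a b))) (QOr (Bang (Qm a)) (Bang (Qm b))))"
    by (rule QMP[OF qor_elim[OF case_pos case_neg] decidable])
qed

lemma decidable_prop_of_ksp_edr:
  assumes ksp: "\<And>q. provQ (QImp (negQ (Bang (negP q))) (Bang q))"
    and edr: "\<And>a b. provQ (negQ (QAnd a b)) \<Longrightarrow>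
      provQ (QImp (Nabla (QOr a b)) (QOr (Nabla a) (Nabla b)))"
  shows "provQ (QOr (Bang p) (Bang (negP p)))"
proof -
  define x where "x = Bang p"
  define y where "y = Bang (negP p)"
  define q where "q = Qm (QOr x y)"
  have refutes: "provQ (QImp (Bang (negP q)) (negQ z))" if "provP (PImp (Qm z) q)" for z
    unfolding negP_def
    by (rule qimp_trans[OF Bang_mono[OF pimp_antimono[OF that]] Bang_negP[unfolded negP_def]])
  have not_x: "provQ (QImp (Bang (negP q)) (negQ x))"
    by (rule refutes) (simp add: q_def pimp_trans[OF P6 iffP_mp_rev[OF H7]])
  have not_y: "provQ (QImp (Bang (negP q)) (negQ y))"
    by (rule refutes) (simp add: q_def pimp_trans[OF P7 iffP_mp_rev[OF H7]])
  have "provQ (QImp (Bang (negP q)) x)"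
    unfolding x_def y_def by (rule qimp_trans[OF not_y[unfolded y_def] ksp])
  then have "provQ (negQ (Bang (negP q)))"
    using qimp_app[OF not_x[unfolded negQ_def]] by (simp add: negQ_def)
  then have "provQ (Nabla (QOr x y))"
    unfolding Nabla_def q_def[symmetric] by (rule QMP[OF ksp])
  then have "provQ (QOr (Nabla x) (Nabla y))"
    by (rule QMP[OF edr[OF Bang_negP_and_self[of p, folded x_def y_def]]])
  then show ?thesis
    unfolding x_def y_def by (rule QMP[OF qor_elim[OF qimp_trans[OF Nabla_Bang Q6] qimp_trans[OF Nabla_Bang Q7]]])
qed

end

lemma EDR_derivableI:
  assumes "\<And>a b. dQ AxP (AxQ \<union> {negQ (QAnd a b)}) R (QImp (Nabla (QOr a b)) (QOr (Nabla a) (Nabla b)))"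
  shows "EDR_derivable AxP AxQ R"
  using assms unfolding EDR_derivable_def EDR_def by auto

lemma dQ_premise: "dQ AxP (AxQ \<union> {h}) R h"
  by (rule AxQI) simp

lemma dQ_EDR:
  "dQ AxP AxQ EDR (negQ (QAnd a b)) \<Longrightarrow> dQ AxP AxQ EDR (QImp (Nabla (QOr a b)) (QOr (Nabla a) (Nabla b)))"
  by (erule RuleI[rotated]) (auto simp: EDR_def)

lemma dQ_D_nabla: "D_nabla \<subseteq> AxQ \<Longrightarrow> dQ AxP AxQ R (QOr (Nabla a) (negQ (Nabla a)))"
  by (rule AxQI) (auto simp: D_nabla_def)

lemma dQ_D_prop: "D_prop \<subseteq> AxQ \<Longrightarrow> dQ AxP AxQ R (QOr (Bang p) (Bang (negP p)))"
  by (rule AxQI) (auto simp: D_prop_def)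

lemma WEM_from_D_nabla: "a \<in> WEM \<Longrightarrow> dQ {} D_nabla {} a"
  unfolding WEM_def using qhc_theory.wem_of_decidable_Nabla[OF dQ_D_nabla] by blast

lemma EDR_derivable_from_WEM: "EDR_derivable {} WEM {}"
proof (rule EDR_derivableI)
  fix a b
  have "dQ {} (WEM \<union> {negQ (QAnd a b)}) {} (QOr (negQ a) (negQ (negQ a)))"
    by (rule AxQI) (auto simp: WEM_def)
  then show "dQ {} (WEM \<union> {negQ (QAnd a b)}) {} (QImp (Nabla (QOr a b)) (QOr (Nabla a) (Nabla b)))"
    by (rule qhc_theory.edr_of_wem[OF dQ_premise])
qed

lemma HNIP_from_D_nabla: "p \<in> HNIP \<Longrightarrow> dP {} D_nabla {} p"
  unfolding HNIP_def using qhc_theory.hnip_of_decidable_Nabla[OF dQ_D_nabla] by blast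

lemma EDR_derivable_from_D_nabla: "EDR_derivable {} D_nabla {}"
  by (rule EDR_derivableI, rule qhc_theory.edr_of_wem[OF dQ_premise
        qhc_theory.wem_of_decidable_Nabla[OF dQ_D_nabla]]) auto

lemma D_nabla_from_HNIP_EDR: "a \<in> D_nabla \<Longrightarrow> dQ HNIP {} EDR a"
proof -
  have "dP HNIP {} EDR (Qm (QOr g (negQ g)))" for g
    by (rule AxPI) (auto simp: HNIP_def)
  then show "a \<in> D_nabla \<Longrightarrow> dQ HNIP {} EDR a"
    unfolding D_nabla_def using qhc_theory.decidable_Nabla_of_hnip_edr dQ_EDR by blast
qed

lemma KSP_from_D_prop: "a \<in> KSP \<Longrightarrow> dQ {} D_prop {} a"
  unfolding KSP_def using qhc_theory.ksp_of_decidable_prop[OF dQ_D_prop] by blast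

lemma EDR_derivable_from_D_prop: "EDR_derivable {} D_prop {}"
  by (rule EDR_derivableI, rule qhc_theory.edr_of_decidable_prop[OF dQ_D_prop]) auto

lemma D_prop_from_KSP_EDR: "a \<in> D_prop \<Longrightarrow> dQ {} KSP EDR a"
proof -
  have "dQ {} KSP EDR (QImp (negQ (Bang (negP q))) (Bang q))" for q
    by (rule AxQI) (auto simp: KSP_def)
  then show "a \<in> D_prop \<Longrightarrow> dQ {} KSP EDR a"
    unfolding D_prop_def using qhc_theory.decidable_prop_of_ksp_edr dQ_EDR by blast
qed

theorem proposition2p29:
  shows "(\<forall>a \<in> WEM. dQ {} D_nabla {} a)
    \<and> EDR_derivable {} WEM {}
    \<and> (((\<forall>p \<in> HNIP. dP {} D_nabla {} p) \<and> EDR_derivable {} D_nabla {})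
         \<and> (\<forall>a \<in> D_nabla. dQ HNIP {} EDR a))
    \<and> (((\<forall>a \<in> KSP. dQ {} D_prop {} a) \<and> EDR_derivable {} D_prop {})
         \<and> (\<forall>a \<in> D_prop. dQ {} KSP EDR a))"
  using WEM_from_D_nabla EDR_derivable_from_WEM
    HNIP_from_D_nabla EDR_derivable_from_D_nabla D_nabla_from_HNIP_EDR
    KSP_from_D_prop EDR_derivable_from_D_prop D_prop_from_KSP_EDR
  by blast

end
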